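(* For every FOLDS vocabulary $K$, the pre-signature $\Sigma_K$ is a signature.
   Context: Type system. Let $V$ be an infinite set of variables with decidable equality and the unrestricted fresh variable provider ($\varphi(X)=V\setminus X$ for finite $X\subseteq V$, with $\mathsf{fr}(X)\in\varphi(X)$ some choice). Preelements are terms built from variables and function symbols; a pretype is $S(t_1,\ldots,t_n)$ with $S$ a type symbol and $t_i$ preelements; $\mathrm{V}(E)$ denotes the variables of $E$ and $E[\bar a/\bar x]$ simultaneous substitution. A precontext is $\Gamma=x_1:A_1,\ldots,x_n:A_n$ with distinct variables and $\mathrm{V}(A_k)\subseteq\{x_1,\ldots,x_{k-1}\}$; $\mathrm{OV}(\Gamma)=x_1,\ldots,x_n$. A type declaration on standard form is a pair $(\Gamma,S)$ with $\Gamma$ a precontext and $S$ a type symbol. For a set $\Sigma$ of such declarations (each symbol declared once), $\mathcal{J}(\Sigma)$ is the smallest set of judgements closed under: (R1) $\langle\rangle$ context; (R2) from $\Gamma$ context and $A$ type $(\Gamma)$ infer $\Gamma,x:A$ context for $x\notin\mathrm{V}(\Gamma)$; (R3) from $x_1:A_1,\ldots,x_n:A_n$ context infer $x_i:A_i\ (x_1:A_1,\ldots,x_n:A_n)$; (R4) if $(\Gamma,S)\in\Sigma$ with $\Gamma=x_1:A_1,\ldots,x_n:A_n$ and $\bar a:\Delta\to\Gamma$, infer $S(a_1,\ldots,a_n)$ type $(\Delta)$; where $\bar a:\Delta\to\Gamma$ abbreviates the judgements $\Delta$ context, $\Gamma$ context, $a_k:A_k[a_1,\ldots,a_{k-1}/x_1,\ldots,x_{k-1}]\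 (\Delta)$ ($k=1,\ldots,n$). $\Sigma$ is a signature if ($\Gamma$ context)$\in\mathcal{J}(\Sigma)$ for every $(\Gamma,S)\in\Sigma$. FOLDS vocabulary: a finite skeletal category $K$ with no non-identity endomorphisms. Write $A\le B$ iff there is a morphism $B\to A$; this is a well-founded partial order on objects; fix a linear order $\le^*$ extending it. For each object $A$ fix a non-repeating enumeration $x^A_1,\ldots,x^A_{n(A)}$ of all non-identity morphisms with domain $A$ such that $\mathrm{cod}(x^A_i)\le^*\mathrm{cod}(x^A_j)$ whenever $i<j$. The objects of $K$ serve as type symbols and the morphisms of $K$ as variables ($K\subseteq V$). For a sequence $\bar u=u_1,\ldots,u_m$ of morphisms with domain $\mathrm{cod}(v)$ write $\bar u^v=u_1v,\ldots,u_mv$ (composites). By induction on $\le$ define for each object $A$ the precontext $\Gamma_A=x_1:A_1,\ldots,x_n:A_n$ where $n=n(A)$, $x_i=x^A_i$, $C_i=\mathrm{cod}(x_i)$, and $A_i=C_i(\mathrm{OV}(\Gamma_{C_i})^{x_i})$. Then $\Sigma_K=\{(\Gamma_A,A): A \text{ an object of } K\}$. *)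

theory Defs
  imports Main
begin

text \<open>Variables have type 'v (decidable equality is automatic in HOL), function symbols
  type 'f, type symbols type 's.\<close>

datatype ('v, 'f) preelem = Var 'v | Fn 'f "('v, 'f) preelem list"

datatype ('v, 'f, 's) pretype = Ty 's "('v, 'f) preelem list"

type_synonym ('v, 'f, 's) precontext = "('v \<times> ('v, 'f, 's) pretype) list"

fun vars_el :: "('v, 'f) preelem \<Rightarrow> 'v set" where
  "vars_el (Var x) = {x}"
| "vars_el (Fn f ts) = (\<Union>t\<in>set ts. vars_el t)"

fun vars_ty :: "('v, 'f, 's) pretype \<Rightarrow> 'v set" where
  "vars_ty (Ty S ts) = (\<Union>t\<in>set ts. vars_el t)"

definition OV :: "('v, 'f, 's) precontext \<Rightarrow> 'v list" where
  "OV \<Gamma> = map fst \<Gamma>"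

definition vars_ctx :: "('v, 'f, 's) precontext \<Rightarrow> 'v set" where
  "vars_ctx \<Gamma> = set (OV \<Gamma>) \<union> (\<Union>p\<in>set \<Gamma>. vars_ty (snd p))"

definition is_precontext :: "('v, 'f, 's) precontext \<Rightarrow> bool" where
  "is_precontext \<Gamma> \<longleftrightarrow> distinct (OV \<Gamma>) \<and>
     (\<forall>k < length \<Gamma>. vars_ty (snd (\<Gamma> ! k)) \<subseteq> set (take k (OV \<Gamma>)))"

fun subst_el :: "('v \<Rightarrow> ('v, 'f) preelem) \<Rightarrow> ('v, 'f) preelem \<Rightarrow> ('v, 'f) preelem" where
  "subst_el \<sigma> (Var x) = \<sigma> x"
| "subst_el \<sigma> (Fn f ts) = Fn f (map (subst_el \<sigma>) ts)"

fun subst_ty :: "('v \<Rightarrow> ('v, 'f) preelem) \<Rightarrow> ('v, 'f, 's) pretype \<Rightarrow> ('v, 'f, 's) pretype" where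
  "subst_ty \<sigma> (Ty S ts) = Ty S (map (subst_el \<sigma>) ts)"

definition subst_map :: "('v, 'f) preelem list \<Rightarrow> 'v list \<Rightarrow> 'v \<Rightarrow> ('v, 'f) preelem" where
  "subst_map as xs y = (case map_of (zip xs as) y of Some a \<Rightarrow> a | None \<Rightarrow> Var y)"

definition subst :: "('v, 'f, 's) pretype \<Rightarrow> ('v, 'f) preelem list \<Rightarrow> 'v list \<Rightarrow> ('v, 'f, 's) pretype"
  where "subst A as xs = subst_ty (subst_map as xs) A"

datatype ('v, 'f, 's) judgement =
    IsCtx "('v, 'f, 's) precontext"
  | IsType "('v, 'f, 's) pretype" "('v, 'f, 's) precontext"
  | HasType "('v, 'f) preelem" "('v, 'f, 's) pretype" "('v, 'f, 's) precontext"

text \<open>A type declaration on standard form is a pair (Gamma, S).\<close>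

inductive_set J :: "(('v, 'f, 's) precontext \<times> 's) set \<Rightarrow> ('v, 'f, 's) judgement set"
  for \<Sigma> where
  R1: "IsCtx [] \<in> J \<Sigma>"
| R2: "\<lbrakk> IsCtx \<Gamma> \<in> J \<Sigma>; IsType A \<Gamma> \<in> J \<Sigma>; x \<notin> vars_ctx \<Gamma> \<rbrakk>
        \<Longrightarrow> IsCtx (\<Gamma> @ [(x, A)]) \<in> J \<Sigma>"
| R3: "\<lbrakk> IsCtx \<Gamma> \<in> J \<Sigma>; i < length \<Gamma> \<rbrakk>
        \<Longrightarrow> HasType (Var (fst (\<Gamma> ! i))) (snd (\<Gamma> ! i)) \<Gamma> \<in> J \<Sigma>"
| R4: "\<lbrakk> (\<Gamma>, S) \<in> \<Sigma>; IsCtx \<Delta> \<in> J \<Sigma>; IsCtx \<Gamma> \<in> J \<Sigma>; length as = length \<Gamma>;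
        \<forall>k < length \<Gamma>. HasType (as ! k)
             (subst (snd (\<Gamma> ! k)) (take k as) (take k (OV \<Gamma>))) \<Delta> \<in> J \<Sigma> \<rbrakk>
        \<Longrightarrow> IsType (Ty S as) \<Delta> \<in> J \<Sigma>"

definition is_signature :: "(('v, 'f, 's) precontext \<times> 's) set \<Rightarrow> bool" where
  "is_signature \<Sigma> \<longleftrightarrow>
     (\<forall>(\<Gamma>, S) \<in> \<Sigma>. is_precontext \<Gamma>) \<and>
     (\<forall>(\<Gamma>, S) \<in> \<Sigma>. \<forall>(\<Gamma>', S') \<in> \<Sigma>. S = S' \<longrightarrow> \<Gamma> = \<Gamma>') \<and>
     (\<forall>(\<Gamma>, S) \<in> \<Sigma>. IsCtx \<Gamma> \<in> J \<Sigma>)"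

text \<open>A category with object set Ob (type symbols) and morphism set Mor (variables),
  domain/codomain maps, composition cmp g f (= g after f, defined when cd f = dm g)
  and identities idm.\<close>

definition is_category ::
  "'s set \<Rightarrow> 'v set \<Rightarrow> ('v \<Rightarrow> 's) \<Rightarrow> ('v \<Rightarrow> 's) \<Rightarrow> ('v \<Rightarrow> 'v \<Rightarrow> 'v) \<Rightarrow> ('s \<Rightarrow> 'v) \<Rightarrow> bool"
where
  "is_category Ob Mor dm cd cmp idm \<longleftrightarrow>
     (\<forall>f\<in>Mor. dm f \<in> Ob \<and> cd f \<in> Ob) \<and>
     (\<forall>A\<in>Ob. idm A \<in> Mor \<and> dm (idm A) = A \<and> cd (idm A) = A) \<and>
     (\<forall>f\<in>Mor. \<forall>g\<in>Mor. cd f = dm g \<longrightarrow>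
        cmp g f \<in> Mor \<and> dm (cmp g f) = dm f \<and> cd (cmp g f) = cd g) \<and>
     (\<forall>f\<in>Mor. cmp f (idm (dm f)) = f \<and> cmp (idm (cd f)) f = f) \<and>
     (\<forall>f\<in>Mor. \<forall>g\<in>Mor. \<forall>h\<in>Mor. cd f = dm g \<longrightarrow> cd g = dm h \<longrightarrow>
        cmp h (cmp g f) = cmp (cmp h g) f)"

definition is_iso ::
  "'v set \<Rightarrow> ('v \<Rightarrow> 's) \<Rightarrow> ('v \<Rightarrow> 's) \<Rightarrow> ('v \<Rightarrow> 'v \<Rightarrow> 'v) \<Rightarrow> ('s \<Rightarrow> 'v) \<Rightarrow> 'v \<Rightarrow> bool"
where
  "is_iso Mor dm cd cmp idm f \<longleftrightarrow> f \<in> Mor \<and>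
     (\<exists>g\<in>Mor. dm g = cd f \<and> cd g = dm f \<and>
        cmp g f = idm (dm f) \<and> cmp f g = idm (cd f))"

definition folds_vocabulary ::
  "'s set \<Rightarrow> 'v set \<Rightarrow> ('v \<Rightarrow> 's) \<Rightarrow> ('v \<Rightarrow> 's) \<Rightarrow> ('v \<Rightarrow> 'v \<Rightarrow> 'v) \<Rightarrow> ('s \<Rightarrow> 'v) \<Rightarrow> bool"
where
  "folds_vocabulary Ob Mor dm cd cmp idm \<longleftrightarrow>
     is_category Ob Mor dm cd cmp idm \<and>
     finite Ob \<and> finite Mor \<and>
     \<comment> \<open>skeletal\<close>
     (\<forall>f. is_iso Mor dm cd cmp idm f \<longrightarrow> dm f = cd f) \<and>
     \<comment> \<open>no non-identity endomorphisms\<close>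
     (\<forall>f\<in>Mor. dm f = cd f \<longrightarrow> f = idm (dm f))"

definition obj_le :: "'v set \<Rightarrow> ('v \<Rightarrow> 's) \<Rightarrow> ('v \<Rightarrow> 's) \<Rightarrow> 's \<Rightarrow> 's \<Rightarrow> bool" where
  "obj_le Mor dm cd A B \<longleftrightarrow> (\<exists>f\<in>Mor. dm f = B \<and> cd f = A)"

definition admissible_enum ::
  "'s set \<Rightarrow> 'v set \<Rightarrow> ('v \<Rightarrow> 's) \<Rightarrow> ('v \<Rightarrow> 's) \<Rightarrow> ('s \<Rightarrow> 'v)
   \<Rightarrow> ('s \<Rightarrow> 's \<Rightarrow> bool) \<Rightarrow> ('s \<Rightarrow> 'v list) \<Rightarrow> bool"
where
  "admissible_enum Ob Mor dm cd idm lestar enum \<longleftrightarrow>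
     (\<forall>A\<in>Ob. lestar A A) \<and>
     (\<forall>A\<in>Ob. \<forall>B\<in>Ob. lestar A B \<longrightarrow> lestar B A \<longrightarrow> A = B) \<and>
     (\<forall>A\<in>Ob. \<forall>B\<in>Ob. \<forall>C\<in>Ob. lestar A B \<longrightarrow> lestar B C \<longrightarrow> lestar A C) \<and>
     (\<forall>A\<in>Ob. \<forall>B\<in>Ob. lestar A B \<or> lestar B A) \<and>
     (\<forall>A\<in>Ob. \<forall>B\<in>Ob. obj_le Mor dm cd A B \<longrightarrow> lestar A B) \<and>
     (\<forall>A\<in>Ob. distinct (enum A) \<and>
        set (enum A) = {f\<in>Mor. dm f = A \<and> f \<noteq> idm A} \<and>
        (\<forall>i j. i < j \<longrightarrow> j < length (enum A) \<longrightarrow>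
           lestar (cd (enum A ! i)) (cd (enum A ! j))))"

text \<open>Gamma_A = x_1 : A_1, ..., x_n : A_n with x_i = x^A_i, C_i = cd x_i and
  A_i = C_i(OV(Gamma_{C_i})^{x_i}); since OV(Gamma_C) is the enumeration of C, this is the
  explicit (non-recursive) form of the inductive definition. u v denotes cmp u v.\<close>

definition Gamma_K ::
  "('v \<Rightarrow> 's) \<Rightarrow> ('v \<Rightarrow> 'v \<Rightarrow> 'v) \<Rightarrow> ('s \<Rightarrow> 'v list) \<Rightarrow> 's \<Rightarrow> ('v, 'f, 's) precontext"
where
  "Gamma_K cd cmp enum A =
     map (\<lambda>x. (x, Ty (cd x) (map (\<lambda>u. Var (cmp u x)) (enum (cd x))))) (enum A)"

definition Sigma_K ::
  "'s set \<Rightarrow> ('v \<Rightarrow> 's) \<Rightarrow> ('v \<Rightarrow> 'v \<Rightarrow> 'v) \<Rightarrow> ('s \<Rightarrow> 'v list)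
   \<Rightarrow> (('v, 'f, 's) precontext \<times> 's) set"
where
  "Sigma_K Ob cd cmp enum = {(Gamma_K cd cmp enum A, A) | A. A \<in> Ob}"

end

theory Submission
  imports Defs
begin

text \<open>Every variable x of \<Gamma>_A is a non-identity morphism A \<rightarrow> C, and the variables of its type
  are the composites u x for the non-identity u out of C. Such a composite is again a non-identity
  morphism out of A (otherwise x would be an isomorphism, hence an endomorphism by skeletality), and
  its codomain cd u lies strictly below C, so it occurs earlier in the codomain-sorted enumeration of
  A. Hence \<Gamma>_A is a precontext. Derivability of \<Gamma>_A as a context follows by well-founded induction
  on A: the type of x is C applied to the composites u x, and rule R4 for the declaration
  (\<Gamma>_C, C) applies because substituting the composites into the types of \<Gamma>_C reproduces, by
  associativity, exactly the types that \<Gamma>_A assigns to them.\<close>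

lemma subst_map_nth:
  assumes "distinct xs" and "length as = length xs" and "j < length xs"
  shows "subst_map as xs (xs ! j) = as ! j"
  using map_of_zip_nth[of xs as j] assms unfolding subst_map_def by simp

lemma vars_ctx_take_subset:
  assumes "is_precontext \<Gamma>"
  shows "vars_ctx (take k \<Gamma>) \<subseteq> set (take k (OV \<Gamma>))"
proof -
  have "vars_ty (snd p) \<subseteq> set (take k (OV \<Gamma>))" if "p \<in> set (take k \<Gamma>)" for p
  proof -
    obtain i where i: "i < k" "i < length \<Gamma>" "p = \<Gamma> ! i"
      using \<open>p \<in> set (take k \<Gamma>)\<close> by (auto simp: in_set_conv_nth)
    have "vars_ty (snd p) \<subseteq> set (take i (OV \<Gamma>))"
      using assms i unfolding is_precontext_def by simp
    also have "\<dots> \<subseteq> set (take k (OV \<Gamma>))"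
      using \<open>i < k\<close> by (simp add: set_take_subset_set_take)
    finally show ?thesis .
  qed
  then show ?thesis
    unfolding vars_ctx_def OV_def by (auto simp: take_map)
qed

lemma precontext_fresh_in_prefix:
  assumes "is_precontext \<Gamma>" and "k < length \<Gamma>"
  shows "fst (\<Gamma> ! k) \<notin> vars_ctx (take k \<Gamma>)"
proof -
  have "k < length (OV \<Gamma>)"
    using assms(2) by (simp add: OV_def)
  then have "OV \<Gamma> ! k \<in> set (drop k (OV \<Gamma>))"
    by (metis Cons_nth_drop_Suc list.set_intros(1))
  then have "fst (\<Gamma> ! k) \<in> set (drop k (OV \<Gamma>))"
    using assms(2) by (simp add: OV_def)
  moreover have "distinct (OV \<Gamma>)"
    using assms(1) unfolding is_precontext_def by simp
  ultimately show ?thesis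
    using vars_ctx_take_subset[OF assms(1), of k] set_take_disj_set_drop_if_distinct[of "OV \<Gamma>" k k]
    by blast
qed

lemma IsCtx_if_prefix_types:
  assumes "is_precontext \<Gamma>"
    and types: "\<And>k. k < length \<Gamma> \<Longrightarrow> IsCtx (take k \<Gamma>) \<in> J \<Sigma> \<Longrightarrow>
                  IsType (snd (\<Gamma> ! k)) (take k \<Gamma>) \<in> J \<Sigma>"
  shows "IsCtx \<Gamma> \<in> J \<Sigma>"
proof -
  have "IsCtx (take k \<Gamma>) \<in> J \<Sigma>" if "k \<le> length \<Gamma>" for k
    using that
  proof (induction k)
    case 0
    show ?case by (simp add: J.R1)
  next
    case (Suc k)
    then have k: "k < length \<Gamma>" and prefix: "IsCtx (take k \<Gamma>) \<in> J \<Sigma>"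
      by simp_all
    have "IsCtx (take k \<Gamma> @ [(fst (\<Gamma> ! k), snd (\<Gamma> ! k))]) \<in> J \<Sigma>"
      using J.R2[OF prefix types[OF k prefix] precontext_fresh_in_prefix[OF assms(1) k]] .
    then show ?case
      using k by (simp add: take_Suc_conv_app_nth)
  qed
  from this[of "length \<Gamma>"] show ?thesis by simp
qed

definition mor_type ::
  "('v \<Rightarrow> 's) \<Rightarrow> ('v \<Rightarrow> 'v \<Rightarrow> 'v) \<Rightarrow> ('s \<Rightarrow> 'v list) \<Rightarrow> 'v \<Rightarrow> ('v, 'f, 's) pretype"
where
  "mor_type cd cmp enum x = Ty (cd x) (map (\<lambda>u. Var (cmp u x)) (enum (cd x)))"

lemma Gamma_K_eq_mor_type:
  "Gamma_K cd cmp enum A = map (\<lambda>x. (x, mor_type cd cmp enum x)) (enum A)"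
  by (simp add: Gamma_K_def mor_type_def)

lemma length_Gamma_K [simp]: "length (Gamma_K cd cmp enum A) = length (enum A)"
  by (simp add: Gamma_K_def)

lemma OV_Gamma_K [simp]: "OV (Gamma_K cd cmp enum A) = enum A"
  by (simp add: Gamma_K_def OV_def comp_def)

lemma nth_Gamma_K:
  "k < length (enum A) \<Longrightarrow> Gamma_K cd cmp enum A ! k = (enum A ! k, mor_type cd cmp enum (enum A ! k))"
  by (simp add: Gamma_K_eq_mor_type)

lemma vars_ty_mor_type:
  "vars_ty (mor_type cd cmp enum x) = (\<lambda>u. cmp u x) ` set (enum (cd x))"
  by (auto simp: mor_type_def)

lemma mem_Sigma_K_iff:
  "(\<Gamma>, S) \<in> Sigma_K Ob cd cmp enum \<longleftrightarrow> S \<in> Ob \<and> \<Gamma> = Gamma_K cd cmp enum S"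
  by (auto simp: Sigma_K_def)

locale folds_enumeration =
  fixes Ob :: "'s set" and Mor :: "'v set"
    and dm cd :: "'v \<Rightarrow> 's" and cmp :: "'v \<Rightarrow> 'v \<Rightarrow> 'v" and idm :: "'s \<Rightarrow> 'v"
    and lestar :: "'s \<Rightarrow> 's \<Rightarrow> bool" and enum :: "'s \<Rightarrow> 'v list"
  assumes vocabulary: "folds_vocabulary Ob Mor dm cd cmp idm"
    and admissible: "admissible_enum Ob Mor dm cd idm lestar enum"
begin

lemma mor_dom_cod: "f \<in> Mor \<Longrightarrow> dm f \<in> Ob \<and> cd f \<in> Ob"
  using vocabulary unfolding folds_vocabulary_def is_category_def by simp

lemma idm_mor: "A \<in> Ob \<Longrightarrow> idm A \<in> Mor \<and> dm (idm A) = A \<and> cd (idm A) = A"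
  using vocabulary unfolding folds_vocabulary_def is_category_def by simp

lemma comp_mor:
  "f \<in> Mor \<Longrightarrow> g \<in> Mor \<Longrightarrow> cd f = dm g \<Longrightarrow>
   cmp g f \<in> Mor \<and> dm (cmp g f) = dm f \<and> cd (cmp g f) = cd g"
  using vocabulary unfolding folds_vocabulary_def is_category_def by simp

lemma comp_assoc:
  "f \<in> Mor \<Longrightarrow> g \<in> Mor \<Longrightarrow> h \<in> Mor \<Longrightarrow> cd f = dm g \<Longrightarrow> cd g = dm h \<Longrightarrow>
   cmp h (cmp g f) = cmp (cmp h g) f"
  using vocabulary unfolding folds_vocabulary_def is_category_def by simp

lemma iso_endo: "is_iso Mor dm cd cmp idm f \<Longrightarrow> dm f = cd f"
  using vocabulary unfolding folds_vocabulary_def by simp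

lemma endo_eq_idm: "f \<in> Mor \<Longrightarrow> dm f = cd f \<Longrightarrow> f = idm (dm f)"
  using vocabulary unfolding folds_vocabulary_def by simp

lemma lestar_refl: "A \<in> Ob \<Longrightarrow> lestar A A"
  using admissible unfolding admissible_enum_def by (elim conjE) blast

lemma lestar_antisym: "A \<in> Ob \<Longrightarrow> B \<in> Ob \<Longrightarrow> lestar A B \<Longrightarrow> lestar B A \<Longrightarrow> A = B"
  using admissible unfolding admissible_enum_def by (elim conjE) blast

lemma lestar_trans:
  "A \<in> Ob \<Longrightarrow> B \<in> Ob \<Longrightarrow> C \<in> Ob \<Longrightarrow> lestar A B \<Longrightarrow> lestar B C \<Longrightarrow> lestar A C"
  using admissible unfolding admissible_enum_def by (elim conjE) blast

lemma lestar_cod_dom: "f \<in> Mor \<Longrightarrow> lestar (cd f) (dm f)"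
  using admissible mor_dom_cod unfolding admissible_enum_def obj_le_def by (elim conjE) blast

lemma distinct_enum: "A \<in> Ob \<Longrightarrow> distinct (enum A)"
  using admissible unfolding admissible_enum_def by (elim conjE) blast

lemma mem_enum_iff: "A \<in> Ob \<Longrightarrow> x \<in> set (enum A) \<longleftrightarrow> x \<in> Mor \<and> dm x = A \<and> x \<noteq> idm A"
  using admissible unfolding admissible_enum_def by (elim conjE) blast

lemma enum_sorted:
  "A \<in> Ob \<Longrightarrow> i < j \<Longrightarrow> j < length (enum A) \<Longrightarrow> lestar (cd (enum A ! i)) (cd (enum A ! j))"
  using admissible unfolding admissible_enum_def by (elim conjE) blast

lemma enum_dom_ne_cod: "A \<in> Ob \<Longrightarrow> x \<in> set (enum A) \<Longrightarrow> cd x \<noteq> A"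
  using endo_eq_idm mem_enum_iff by metis

lemma comp_mem_enum:
  assumes A: "A \<in> Ob" and x: "x \<in> set (enum A)" and u: "u \<in> set (enum (cd x))"
  shows "cmp u x \<in> set (enum A)"
proof -
  have x_mor: "x \<in> Mor" "dm x = A" and C: "cd x \<in> Ob"
    using x mem_enum_iff[OF A] mor_dom_cod by auto
  have u_mor: "u \<in> Mor" "dm u = cd x"
    using u mem_enum_iff[OF C] by auto
  have ux: "cmp u x \<in> Mor" "dm (cmp u x) = A" "cd (cmp u x) = cd u"
    using comp_mor[OF x_mor(1) u_mor(1)] u_mor(2) x_mor(2) by auto
  have "cmp u x \<noteq> idm A"
  proof
    assume inv: "cmp u x = idm A"
    have "cd u = dm x"
      using ux inv idm_mor[OF A] x_mor(2) by simp
    then have xu: "cmp x u \<in> Mor" "dm (cmp x u) = cd x" "cd (cmp x u) = cd x"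
      using comp_mor[OF u_mor(1) x_mor(1)] u_mor(2) by auto
    then have "cmp x u = idm (cd x)"
      using endo_eq_idm by metis
    then have "is_iso Mor dm cd cmp idm x"
      unfolding is_iso_def using x_mor u_mor \<open>cd u = dm x\<close> inv by auto
    then show False
      using iso_endo enum_dom_ne_cod[OF A x] x_mor(2) by metis
  qed
  then show ?thesis
    using mem_enum_iff[OF A] ux by blast
qed

lemma comp_enum_index_less:
  assumes A: "A \<in> Ob" and k: "k < length (enum A)" and u: "u \<in> set (enum (cd (enum A ! k)))"
  obtains j where "j < k" and "enum A ! j = cmp u (enum A ! k)"
proof -
  let ?x = "enum A ! k"
  have x: "?x \<in> set (enum A)" using k by simp
  have x_mor: "?x \<in> Mor" "dm ?x = A" and C: "cd ?x \<in> Ob"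
    using x mem_enum_iff[OF A] mor_dom_cod by auto
  have u_mor: "u \<in> Mor" "dm u = cd ?x" and D: "cd u \<in> Ob"
    using u mem_enum_iff[OF C] mor_dom_cod by auto
  have cd_ux: "cd (cmp u ?x) = cd u"
    using comp_mor[OF x_mor(1) u_mor(1)] u_mor(2) by simp
  have D_below: "lestar (cd u) (cd ?x)" and D_ne: "cd u \<noteq> cd ?x"
    using lestar_cod_dom[OF u_mor(1)] enum_dom_ne_cod[OF C u] u_mor(2) by auto
  obtain j where j: "j < length (enum A)" "enum A ! j = cmp u ?x"
    using comp_mem_enum[OF A x u] by (auto simp: in_set_conv_nth)
  have "j < k"
  proof (rule ccontr)
    assume "\<not> j < k"
    then consider "j = k" | "k < j" by linarith
    then show False
    proof cases
      case 1
      then show ?thesis using j(2) cd_ux D_ne by simp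
    next
      case 2
      then have "lestar (cd ?x) (cd u)"
        using enum_sorted[OF A _ j(1)] j(2) cd_ux by metis
      then show ?thesis
        using lestar_antisym[OF D C] D_below D_ne by blast
    qed
  qed
  then show ?thesis using that j(2) by blast
qed

lemma vars_mor_type_enum_subset:
  assumes "A \<in> Ob" and "k < length (enum A)"
  shows "vars_ty (mor_type cd cmp enum (enum A ! k)) \<subseteq> set (take k (enum A))"
proof
  fix y assume "y \<in> vars_ty (mor_type cd cmp enum (enum A ! k))"
  then obtain u where u: "u \<in> set (enum (cd (enum A ! k)))" and y: "y = cmp u (enum A ! k)"
    by (auto simp: vars_ty_mor_type)
  obtain j where "j < k" and "enum A ! j = y"
    using comp_enum_index_less[OF assms u] y by metis
  then show "y \<in> set (take k (enum A))"
    using assms(2) by (auto simp: in_set_conv_nth intro!: exI[of _ j])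
qed

lemma precontext_Gamma_K: "A \<in> Ob \<Longrightarrow> is_precontext (Gamma_K cd cmp enum A)"
  unfolding is_precontext_def
  by (simp add: distinct_enum nth_Gamma_K vars_mor_type_enum_subset)

lemma finite_Ob: "finite Ob"
  using vocabulary unfolding folds_vocabulary_def by simp

lemma object_induct [consumes 1, case_names step]:
  assumes "A \<in> Ob"
    and step: "\<And>A. A \<in> Ob \<Longrightarrow> (\<And>x. x \<in> set (enum A) \<Longrightarrow> P (cd x)) \<Longrightarrow> P A"
  shows "P A"
  using assms(1)
proof (induction A rule: measure_induct_rule[where f = "\<lambda>A. card {B \<in> Ob. lestar B A}"])
  case (less A)
  show ?case
  proof (rule step[OF less.prems])
    fix x assume x: "x \<in> set (enum A)"
    then have x_mor: "x \<in> Mor" "dm x = A" and C: "cd x \<in> Ob"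
      using mem_enum_iff[OF less.prems] mor_dom_cod by auto
    have below: "lestar (cd x) A"
      using lestar_cod_dom[OF x_mor(1)] x_mor(2) by simp
    have "{B \<in> Ob. lestar B (cd x)} \<subseteq> {B \<in> Ob. lestar B A}"
      using lestar_trans[OF _ C less.prems _ below] by blast
    moreover have "A \<in> {B \<in> Ob. lestar B A} - {B \<in> Ob. lestar B (cd x)}"
      using lestar_refl[OF less.prems] lestar_antisym[OF less.prems C _ below]
        enum_dom_ne_cod[OF less.prems x] less.prems by auto
    ultimately have "{B \<in> Ob. lestar B (cd x)} \<subset> {B \<in> Ob. lestar B A}"
      by blast
    then have "card {B \<in> Ob. lestar B (cd x)} < card {B \<in> Ob. lestar B A}"
      by (simp add: finite_Ob psubset_card_mono)
    then show "P (cd x)"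
      using less.IH C by blast
  qed
qed

lemma subst_mor_type:
  assumes x: "x \<in> Mor" and k: "k < length (enum (cd x))"
  shows "subst (mor_type cd cmp enum (enum (cd x) ! k))
           (take k (map (\<lambda>u. Var (cmp u x)) (enum (cd x)))) (take k (enum (cd x)))
         = (mor_type cd cmp enum (cmp (enum (cd x) ! k) x) :: ('v, 'f, 's) pretype)"
proof -
  define C where "C = cd x"
  define v where "v = enum C ! k"
  have C: "C \<in> Ob" using mor_dom_cod[OF x] C_def by simp
  have v_mor: "v \<in> Mor" "dm v = C"
    using mem_enum_iff[OF C, of v] k unfolding v_def C_def by auto
  have cd_vx: "cd (cmp v x) = cd v"
    using comp_mor[OF x v_mor(1)] v_mor(2) C_def by simp
  have "subst_map (take k (map (\<lambda>u. Var (cmp u x)) (enum C))) (take k (enum C)) (cmp w v)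
          = (Var (cmp w (cmp v x)) :: ('v, 'f) preelem)"
    if w: "w \<in> set (enum (cd v))" for w
  proof -
    have w_mor: "w \<in> Mor" "dm w = cd v"
      using w mem_enum_iff mor_dom_cod[OF v_mor(1)] by blast+
    obtain j where j: "j < k" "enum C ! j = cmp w v"
      using comp_enum_index_less[OF C k[folded C_def] w[unfolded v_def]] v_def by metis
    have "subst_map (take k (map (\<lambda>u. Var (cmp u x)) (enum C))) (take k (enum C)) (take k (enum C) ! j)
            = take k (map (\<lambda>u. Var (cmp u x)) (enum C)) ! j"
      using j k distinct_enum[OF C] unfolding C_def by (intro subst_map_nth) (simp_all add: C_def)
    moreover have "cmp (cmp w v) x = cmp w (cmp v x)"
      using comp_assoc[OF x v_mor(1) w_mor(1)] v_mor(2) w_mor(2) C_def by simp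
    ultimately show ?thesis
      using j k C_def by simp
  qed
  then show ?thesis
    unfolding C_def[symmetric] v_def[symmetric]
    by (simp add: subst_def mor_type_def cd_vx cong: map_cong)
qed

lemma IsType_mor_type:
  fixes A :: 's and k :: nat
  defines "\<Delta> \<equiv> take k (Gamma_K cd cmp enum A) :: ('v, 'f, 's) precontext"
  assumes A: "A \<in> Ob" and k: "k < length (enum A)"
    and cod_ctx: "IsCtx (Gamma_K cd cmp enum (cd (enum A ! k)) :: ('v, 'f, 's) precontext)
                    \<in> J (Sigma_K Ob cd cmp enum)"
    and prefix_ctx: "IsCtx \<Delta> \<in> J (Sigma_K Ob cd cmp enum)"
  shows "IsType (mor_type cd cmp enum (enum A ! k)) \<Delta> \<in> J (Sigma_K Ob cd cmp enum)"
proof -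
  define x where "x = enum A ! k"
  define C where "C = cd x"
  have "x \<in> set (enum A)"
    using k x_def by simp
  then have x_mor: "x \<in> Mor" and C: "C \<in> Ob"
    using mem_enum_iff[OF A] mor_dom_cod C_def by auto
  have args: "HasType (map (\<lambda>u. Var (cmp u x)) (enum C) ! k')
      (subst (snd (Gamma_K cd cmp enum C ! k'))
        (take k' (map (\<lambda>u. Var (cmp u x)) (enum C))) (take k' (OV (Gamma_K cd cmp enum C))))
      \<Delta> \<in> J (Sigma_K Ob cd cmp enum)"
    if k': "k' < length (Gamma_K cd cmp enum C)" for k'
  proof -
    define v where "v = enum C ! k'"
    obtain i where i: "i < k" "enum A ! i = cmp v x"
      using comp_enum_index_less[OF A k] k' unfolding v_def C_def x_def by (metis nth_mem length_Gamma_K)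
    have "HasType (Var (fst (\<Delta> ! i))) (snd (\<Delta> ! i)) \<Delta> \<in> J (Sigma_K Ob cd cmp enum)"
      using J.R3[OF prefix_ctx] i k by (simp add: \<Delta>_def)
    then show ?thesis
      using i k k' by (simp add: \<Delta>_def nth_Gamma_K v_def C_def subst_mor_type[OF x_mor])
  qed
  have "(Gamma_K cd cmp enum C :: ('v, 'f, 's) precontext, C) \<in> Sigma_K Ob cd cmp enum"
    using C unfolding Sigma_K_def by blast
  then have "IsType (Ty C (map (\<lambda>u. Var (cmp u x)) (enum C))) \<Delta> \<in> J (Sigma_K Ob cd cmp enum)"
    by (rule J.R4[OF _ prefix_ctx cod_ctx[folded x_def C_def]]) (use args in auto)
  then show ?thesis
    by (simp add: mor_type_def x_def C_def)
qed

lemma IsCtx_Gamma_K: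
  "A \<in> Ob \<Longrightarrow> IsCtx (Gamma_K cd cmp enum A :: ('v, 'f, 's) precontext) \<in> J (Sigma_K Ob cd cmp enum)"
proof (induction A rule: object_induct)
  case (step A)
  show ?case
  proof (rule IsCtx_if_prefix_types[OF precontext_Gamma_K[OF step.hyps]])
    fix k assume k: "k < length (Gamma_K cd cmp enum A :: ('v, 'f, 's) precontext)"
      and prefix_ctx: "IsCtx (take k (Gamma_K cd cmp enum A :: ('v, 'f, 's) precontext))
                         \<in> J (Sigma_K Ob cd cmp enum)"
    have "enum A ! k \<in> set (enum A)"
      using k by simp
    then show "IsType (snd (Gamma_K cd cmp enum A ! k))
                 (take k (Gamma_K cd cmp enum A :: ('v, 'f, 's) precontext)) \<in> J (Sigma_K Ob cd cmp enum)"
      using IsType_mor_type[OF step.hyps _ step.IH prefix_ctx] k by (simp add: nth_Gamma_K)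
  qed
qed

end

theorem mainTheorem8:
  fixes Ob :: "'s set" and Mor :: "'v set"
    and dm cd :: "'v \<Rightarrow> 's" and cmp :: "'v \<Rightarrow> 'v \<Rightarrow> 'v" and idm :: "'s \<Rightarrow> 'v"
    and lestar :: "'s \<Rightarrow> 's \<Rightarrow> bool" and enum :: "'s \<Rightarrow> 'v list"
  assumes "infinite (UNIV :: 'v set)"
    and "folds_vocabulary Ob Mor dm cd cmp idm"
    and "admissible_enum Ob Mor dm cd idm lestar enum"
  shows "is_signature (Sigma_K Ob cd cmp enum :: (('v, 'f, 's) precontext \<times> 's) set)"
proof -
  interpret folds_enumeration Ob Mor dm cd cmp idm lestar enum
    using assms(2,3) by unfold_locales
  show ?thesis
    unfolding is_signature_def
    by (auto simp: mem_Sigma_K_iff precontext_Gamma_K IsCtx_Gamma_K)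
qed

end
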